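(* For every concurrent game structure $G$, every $F\subseteq S$ and every $\varepsilon>0$, there exist $k>0$ and a $k$-uniform player-1 selector $\xi$ such that the memoryless strategy $\overline{\xi}$ is $\varepsilon$-optimal for $\mathrm{Safe}(F)$, i.e. $\inf_{\pi_2}\Pr_s^{\overline{\xi},\pi_2}(\mathrm{Safe}(F))\ge\mathrm{val}_1(\mathrm{Safe}(F))(s)-\varepsilon$ for all $s\in S$.
   Context: Concurrent game structure $G=(S,M,\Gamma_1,\Gamma_2,\delta)$: finite states $S$, finite moves $M$, nonempty move sets $\Gamma_i(s)\subseteq M$, $\delta(s,a_1,a_2)\in\mathrm{Distr}(S)$ (simultaneous independent moves). A selector for player 1 assigns to each state $s$ a distribution on $\Gamma_1(s)$; $\overline{\xi}$ is the memoryless strategy playing $\xi$ forever. Strategies map histories to distributions on available moves; $\Pr_s^{\pi_1,\pi_2}$ is the induced measure on plays from $s$. $\mathrm{Safe}(F)$: plays staying in $F$ forever; $\mathrm{val}_1(\mathrm{Safe}(F))(s)=\sup_{\pi_1}\inf_{\pi_2}\Pr_s^{\pi_1,\pi_2}(\mathrm{Safe}(F))$. Let $T=S\setminus F$ and $W_1=\{s:\mathrm{val}_1(\mathrm{Safe}(F))(s)=1\}$. A selector $\xi$ is $k$-uniform if for all $s\in S\setminus(T\cup W_1)$ and all moves $a$ in the support of $\xi(s)$ there are integers $0\le i\le j\le k$ with $\xi(s)(a)=i/j$. *)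

theory Defs
  imports "HOL-Probability.Probability"
begin

text \<open>Concurrent game structures. States are the (finite) type 's, moves the (finite)
  type 'm, so S = UNIV and M = UNIV. G1 s, G2 s are the move sets, d the transition function.\<close>

definition cgs :: "('s::finite \<Rightarrow> 'm::finite set) \<Rightarrow> ('s \<Rightarrow> 'm set) \<Rightarrow> bool" where
  "cgs G1 G2 \<longleftrightarrow> (\<forall>s. G1 s \<noteq> {} \<and> G2 s \<noteq> {})"

definition strategy :: "('s \<Rightarrow> 'm set) \<Rightarrow> ('s list \<Rightarrow> 'm pmf) \<Rightarrow> bool" where
  "strategy G st \<longleftrightarrow> (\<forall>h. h \<noteq> [] \<longrightarrow> set_pmf (st h) \<subseteq> G (last h))"

definition selector :: "('s \<Rightarrow> 'm set) \<Rightarrow> ('s \<Rightarrow> 'm pmf) \<Rightarrow> bool" where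
  "selector G xi \<longleftrightarrow> (\<forall>s. set_pmf (xi s) \<subseteq> G s)"

definition memoryless :: "('s \<Rightarrow> 'm pmf) \<Rightarrow> ('s list \<Rightarrow> 'm pmf)" where
  "memoryless xi = (\<lambda>h. xi (last h))"

text \<open>Distribution of the history of length n+1 (prefix of the play) from s.\<close>
fun hist :: "('s \<Rightarrow> 'm \<Rightarrow> 'm \<Rightarrow> 's pmf) \<Rightarrow> 's \<Rightarrow> ('s list \<Rightarrow> 'm pmf) \<Rightarrow> ('s list \<Rightarrow> 'm pmf)
    \<Rightarrow> nat \<Rightarrow> 's list pmf" where
  "hist d s p1 p2 0 = return_pmf [s]"
| "hist d s p1 p2 (Suc n) =
     bind_pmf (hist d s p1 p2 n) (\<lambda>h.
     bind_pmf (p1 h) (\<lambda>a1.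
     bind_pmf (p2 h) (\<lambda>a2.
     map_pmf (\<lambda>t. h @ [t]) (d (last h) a1 a2))))"

text \<open>Pr_s^{p1,p2}(Safe F): probability that the play stays in F forever, i.e. (by
  continuity of the measure from above) the infimum over n of the probability that the
  first n+1 states lie in F.\<close>
definition prSafe :: "('s \<Rightarrow> 'm \<Rightarrow> 'm \<Rightarrow> 's pmf) \<Rightarrow> 's set \<Rightarrow> 's \<Rightarrow> ('s list \<Rightarrow> 'm pmf)
    \<Rightarrow> ('s list \<Rightarrow> 'm pmf) \<Rightarrow> real" where
  "prSafe d F s p1 p2 = (INF n. measure_pmf.prob (hist d s p1 p2 n) {h. set h \<subseteq> F})"

definition val1Safe :: "('s \<Rightarrow> 'm set) \<Rightarrow> ('s \<Rightarrow> 'm set) \<Rightarrow> ('s \<Rightarrow> 'm \<Rightarrow> 'm \<Rightarrow> 's pmf)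
    \<Rightarrow> 's set \<Rightarrow> 's \<Rightarrow> real" where
  "val1Safe G1 G2 d F s =
     (SUP p1\<in>{p. strategy G1 p}. INF p2\<in>{p. strategy G2 p}. prSafe d F s p1 p2)"

definition k_uniform :: "('s \<Rightarrow> 'm set) \<Rightarrow> ('s \<Rightarrow> 'm set) \<Rightarrow> ('s \<Rightarrow> 'm \<Rightarrow> 'm \<Rightarrow> 's pmf)
    \<Rightarrow> 's set \<Rightarrow> nat \<Rightarrow> ('s \<Rightarrow> 'm pmf) \<Rightarrow> bool" where
  "k_uniform G1 G2 d F k xi \<longleftrightarrow>
     (\<forall>s. s \<notin> (UNIV - F) \<and> s \<notin> {t. val1Safe G1 G2 d F t = 1} \<longrightarrow>
        (\<forall>a\<in>set_pmf (xi s). \<exists>i j::nat. i \<le> j \<and> j \<le> k \<and> pmf (xi s) a = real i / real j))"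

end

theory Submission
  imports Defs "HOL-Analysis.Analysis"
begin

text \<open>Value iteration \<open>u\<^sub>0 = 1\<^sub>F\<close>, \<open>u\<^sub>n\<^sub>+\<^sub>1 = Pre u\<^sub>n\<close> decreases to a function \<open>w\<close>
  with \<open>val\<^sub>1 \<le> w\<close>, because player 2 can answer any strategy greedily against the remaining
  \<open>u\<^sub>n\<^sub>-\<^sub>k\<close>. By compactness there is at every state \<open>s \<in> F\<close> a distribution \<open>x\<^sub>s\<close> such that
  every reply \<open>b\<close> gives \<open>E[w | x\<^sub>s, b] \<ge> w s\<close>. Rounding \<open>x\<^sub>s\<close> up to fractions with
  denominator at most \<open>N + |M|\<close> keeps its support and moves it by \<open>O(|M|\<^sup>2/N)\<close> in \<open>\<ell>\<^sub>1\<close>.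
  The rounded selector still makes \<open>w + \<epsilon> w\<^sup>2\<close> a submartingale along safe plays once \<open>N\<close>
  is large: if the next-step values of the moves in the support of \<open>x\<^sub>s\<close> coincide, rounding loses
  nothing, and otherwise their spread contributes a variance to \<open>E[w\<^sup>2]\<close> that pays for the
  rounding loss. Hence \<open>w s \<le> (1 + \<epsilon>) Pr(safe for n steps)\<close>, i.e.
  \<open>Pr(safe) \<ge> w s - \<epsilon> \<ge> val\<^sub>1 s - \<epsilon>\<close>.\<close>

section \<open>Histories and one-step expectations\<close>

lemma length_hist: "h \<in> set_pmf (hist d s p1 p2 n) \<Longrightarrow> length h = Suc n"
  by (induction n arbitrary: h) auto

lemma hist_nonempty: "h \<in> set_pmf (hist d s p1 p2 n) \<Longrightarrow> h \<noteq> []"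
  using length_hist by fastforce

lemma finite_set_pmf_hist:
  fixes d :: "'s::finite \<Rightarrow> 'm \<Rightarrow> 'm \<Rightarrow> 's pmf"
  shows "finite (set_pmf (hist d s p1 p2 n))"
proof (induction n)
  case (Suc n)
  have "set_pmf (hist d s p1 p2 (Suc n)) \<subseteq> (\<lambda>(h, t). h @ [t]) ` (set_pmf (hist d s p1 p2 n) \<times> UNIV)"
    by (auto simp: set_bind_pmf)
  moreover have "finite ((\<lambda>(h, t). h @ [t]) ` (set_pmf (hist d s p1 p2 n) \<times> (UNIV :: 's set)))"
    using Suc by simp
  ultimately show ?case by (rule finite_subset)
qed simp

lemma expectation_finite_support:
  fixes f :: "'a \<Rightarrow> real"
  assumes "finite (set_pmf P)"
  shows "measure_pmf.expectation P f = (\<Sum>h\<in>set_pmf P. pmf P h * f h)"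
  using assms by (subst integral_measure_pmf_real[of "set_pmf P"]) (auto simp: mult.commute)

lemma expectation_finite_UNIV:
  fixes f :: "'a::finite \<Rightarrow> real"
  shows "measure_pmf.expectation P f = (\<Sum>h\<in>UNIV. pmf P h * f h)"
  by (subst integral_measure_pmf_real[of UNIV]) (auto simp: mult.commute)

lemma prob_eq_expectation:
  "measure_pmf.prob P A = measure_pmf.expectation P (\<lambda>h. if h \<in> A then 1 else 0)"
proof -
  have "(\<lambda>h. if h \<in> A then 1 else 0) = (indicator A :: 'a \<Rightarrow> real)"
    by (auto simp: indicator_def)
  then show ?thesis by simp
qed

definition step_expectation :: "('s \<Rightarrow> 'm \<Rightarrow> 'm \<Rightarrow> 's pmf) \<Rightarrow> ('s list \<Rightarrow> 'm pmf)
    \<Rightarrow> ('s list \<Rightarrow> 'm pmf) \<Rightarrow> 's list \<Rightarrow> ('s list \<Rightarrow> real) \<Rightarrow> real" where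
  "step_expectation d p1 p2 h f = (\<Sum>a\<in>UNIV. pmf (p1 h) a * (\<Sum>b\<in>UNIV. pmf (p2 h) b *
      (\<Sum>t\<in>UNIV. pmf (d (last h) a b) t * f (h @ [t]))))"

lemma expectation_hist_Suc:
  fixes d :: "'s::finite \<Rightarrow> 'm::finite \<Rightarrow> 'm \<Rightarrow> 's pmf" and f :: "'s list \<Rightarrow> real"
  shows "measure_pmf.expectation (hist d s p1 p2 (Suc n)) f =
    (\<Sum>h\<in>set_pmf (hist d s p1 p2 n). pmf (hist d s p1 p2 n) h * step_expectation d p1 p2 h f)"
proof -
  have step: "measure_pmf.expectation
      (p1 h \<bind> (\<lambda>a. p2 h \<bind> (\<lambda>b. map_pmf (\<lambda>t. h @ [t]) (d (last h) a b)))) f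
      = step_expectation d p1 p2 h f" for h
    unfolding step_expectation_def
    by (simp add: pmf_expectation_bind[of UNIV] set_bind_pmf expectation_finite_UNIV)
  show ?thesis
    by (simp only: hist.simps, subst pmf_expectation_bind[of "set_pmf (hist d s p1 p2 n)"])
      (simp_all add: finite_set_pmf_hist set_bind_pmf step)
qed

lemma expectation_hist_Suc_le:
  fixes d :: "'s::finite \<Rightarrow> 'm::finite \<Rightarrow> 'm \<Rightarrow> 's pmf" and f g :: "'s list \<Rightarrow> real"
  assumes "\<And>h. h \<in> set_pmf (hist d s p1 p2 n) \<Longrightarrow> step_expectation d p1 p2 h f \<le> g h"
  shows "measure_pmf.expectation (hist d s p1 p2 (Suc n)) f
           \<le> measure_pmf.expectation (hist d s p1 p2 n) g"
  unfolding expectation_hist_Suc expectation_finite_support[OF finite_set_pmf_hist, of d s p1 p2 n g]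
  using assms by (intro sum_mono mult_left_mono) auto

lemma expectation_hist_le_Suc:
  fixes d :: "'s::finite \<Rightarrow> 'm::finite \<Rightarrow> 'm \<Rightarrow> 's pmf" and f g :: "'s list \<Rightarrow> real"
  assumes "\<And>h. h \<in> set_pmf (hist d s p1 p2 n) \<Longrightarrow> g h \<le> step_expectation d p1 p2 h f"
  shows "measure_pmf.expectation (hist d s p1 p2 n) g
           \<le> measure_pmf.expectation (hist d s p1 p2 (Suc n)) f"
  unfolding expectation_hist_Suc expectation_finite_support[OF finite_set_pmf_hist, of d s p1 p2 n g]
  using assms by (intro sum_mono mult_left_mono) auto

lemma step_expectation_nonneg:
  assumes "\<And>h. 0 \<le> f h"
  shows "0 \<le> step_expectation d p1 p2 h f"
  unfolding step_expectation_def using assms by (intro sum_nonneg mult_nonneg_nonneg) auto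

lemma step_expectation_return:
  fixes b :: "'s list \<Rightarrow> 'm::finite"
  shows "step_expectation d p1 (\<lambda>h. return_pmf (b h)) h f =
    (\<Sum>a\<in>UNIV. pmf (p1 h) a * (\<Sum>t\<in>UNIV. pmf (d (last h) a (b h)) t * f (h @ [t])))"
  unfolding step_expectation_def by (simp add: pmf_return if_distrib sum.delta cong: if_cong)

lemma prSafe_nonneg: "0 \<le> prSafe d F s p1 p2"
  unfolding prSafe_def by (rule cINF_greatest) auto

lemma prSafe_le_prob: "prSafe d F s p1 p2 \<le> measure_pmf.prob (hist d s p1 p2 n) {h. set h \<subseteq> F}"
  unfolding prSafe_def by (rule cINF_lower) (auto intro!: bdd_belowI[of _ 0])

lemma ex_strategy: "(\<And>s. G s \<noteq> {}) \<Longrightarrow> \<exists>p. strategy G p"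
  unfolding strategy_def by (rule exI[of _ "\<lambda>h. return_pmf (SOME a. a \<in> G (last h))"])
    (auto simp: some_in_eq)

section \<open>Inequalities for finite distributions\<close>

lemma sum_pmf_UNIV: "(\<Sum>t\<in>UNIV. pmf (p :: 'a::finite pmf) t) = 1"
  by (rule sum_pmf_eq_1) auto

lemma sum_weighted_bounds:
  fixes p f :: "'a::finite \<Rightarrow> real"
  assumes "\<And>a. 0 \<le> p a" "(\<Sum>a\<in>UNIV. p a) = 1" "\<And>a. 0 \<le> f a" "\<And>a. f a \<le> 1"
  shows "0 \<le> (\<Sum>a\<in>UNIV. p a * f a)" "(\<Sum>a\<in>UNIV. p a * f a) \<le> 1"
proof -
  show "0 \<le> (\<Sum>a\<in>UNIV. p a * f a)" using assms by (intro sum_nonneg) auto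
  have "(\<Sum>a\<in>UNIV. p a * f a) \<le> (\<Sum>a\<in>UNIV. p a)"
    using assms(1,4) by (intro sum_mono mult_left_le)
  then show "(\<Sum>a\<in>UNIV. p a * f a) \<le> 1" using assms(2) by simp
qed

lemma sum_mult_square_eq_square_plus_variance:
  fixes q m :: "'a \<Rightarrow> real"
  assumes "finite A" "(\<Sum>a\<in>A. q a) = 1"
  shows "(\<Sum>a\<in>A. q a * (m a)^2)
           = (\<Sum>a\<in>A. q a * m a)^2 + (\<Sum>a\<in>A. q a * (m a - (\<Sum>a\<in>A. q a * m a))^2)"
proof -
  define \<mu> where "\<mu> = (\<Sum>a\<in>A. q a * m a)"
  have "(\<Sum>a\<in>A. q a * (m a - \<mu>)^2) = (\<Sum>a\<in>A. q a * (m a)^2 - 2 * \<mu> * (q a * m a) + \<mu>^2 * q a)"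
    by (intro sum.cong) (auto simp: power2_eq_square algebra_simps)
  also have "\<dots> = (\<Sum>a\<in>A. q a * (m a)^2) - \<mu>^2"
    using assms by (simp add: sum.distrib sum_subtractf flip: sum_distrib_left \<mu>_def)
      (simp add: power2_eq_square)
  finally show ?thesis unfolding \<mu>_def[symmetric] by simp
qed

lemma two_point_spread_le_sum_weighted_squares:
  fixes q m :: "'a::finite \<Rightarrow> real"
  assumes q: "\<And>a. 0 \<le> q a" "(\<Sum>a\<in>UNIV. q a) = 1" and "a1 \<noteq> a2"
  shows "q a1 * q a2 * (m a1 - m a2)^2 \<le> (\<Sum>a\<in>UNIV. q a * (m a - \<mu>)^2)"
proof -
  define x z where "x = m a1 - \<mu>" and "z = m a2 - \<mu>"
  have "q a1 + q a2 = (\<Sum>a\<in>{a1, a2}. q a)" using \<open>a1 \<noteq> a2\<close> by simp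
  also have "\<dots> \<le> 1" using q by (metis sum_mono2 finite subset_UNIV)
  finally have q12: "q a1 + q a2 \<le> 1" .
  have "q a1 * q a2 * (x - z)^2 = q a1 * (q a1 + q a2) * x^2 + q a2 * (q a1 + q a2) * z^2
          - (q a1 * x + q a2 * z)^2"
    by (simp add: power2_eq_square algebra_simps)
  also have "\<dots> \<le> q a1 * (q a1 + q a2) * x^2 + q a2 * (q a1 + q a2) * z^2"
    by simp
  also have "\<dots> \<le> q a1 * x^2 + q a2 * z^2"
    using q q12 by (intro add_mono mult_right_mono) (auto intro: mult_left_le)
  also have "\<dots> = (\<Sum>a\<in>{a1, a2}. q a * (m a - \<mu>)^2)"
    using \<open>a1 \<noteq> a2\<close> by (simp add: x_def z_def)
  also have "\<dots> \<le> (\<Sum>a\<in>UNIV. q a * (m a - \<mu>)^2)"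
    using q by (intro sum_mono2) auto
  finally show ?thesis by (simp add: x_def z_def)
qed

lemma sum_mult_eq_const_on_support:
  fixes p m :: "'a \<Rightarrow> real"
  assumes "finite A" "(\<Sum>a\<in>A. p a) = 1" "\<And>a. a \<in> A \<Longrightarrow> p a \<noteq> 0 \<Longrightarrow> m a = c"
  shows "(\<Sum>a\<in>A. p a * m a) = c"
proof -
  have "(\<Sum>a\<in>A. p a * m a) = (\<Sum>a\<in>A. p a * c)"
    using assms(3) by (intro sum.cong) auto
  then show ?thesis using assms(2) by (simp flip: sum_distrib_right)
qed

lemma sum_mult_diff_le_sum_abs:
  fixes x q m :: "'a \<Rightarrow> real"
  assumes "\<And>a. 0 \<le> m a" "\<And>a. m a \<le> 1"
  shows "(\<Sum>a\<in>A. x a * m a) - (\<Sum>a\<in>A. q a * m a) \<le> (\<Sum>a\<in>A. \<bar>x a - q a\<bar>)"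
proof -
  have "(\<Sum>a\<in>A. x a * m a) - (\<Sum>a\<in>A. q a * m a) = (\<Sum>a\<in>A. (x a - q a) * m a)"
    by (simp add: sum_subtractf left_diff_distrib)
  also have "\<dots> \<le> (\<Sum>a\<in>A. \<bar>x a - q a\<bar>)"
  proof (rule sum_mono)
    fix a
    have "(x a - q a) * m a \<le> \<bar>x a - q a\<bar> * m a"
      using assms(1) by (intro mult_right_mono) auto
    also have "\<dots> \<le> \<bar>x a - q a\<bar>" using assms(2) by (simp add: mult_left_le)
    finally show "(x a - q a) * m a \<le> \<bar>x a - q a\<bar>" .
  qed
  finally show ?thesis .
qed

lemma power2_le_power2_add_twice:
  fixes y \<mu> e :: real
  assumes "0 \<le> y" "y \<le> 1" "0 \<le> \<mu>" "\<mu> \<le> 1" "y - \<mu> \<le> e" "0 \<le> e"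
  shows "y^2 \<le> \<mu>^2 + 2 * e"
proof (cases "y \<le> \<mu>")
  case True
  then have "y^2 \<le> \<mu>^2" using assms(1) by (intro power_mono)
  then show ?thesis using assms(6) by linarith
next
  case False
  have "y^2 - \<mu>^2 = (y - \<mu>) * (y + \<mu>)" by (simp add: power2_eq_square algebra_simps)
  also have "\<dots> \<le> e * 2" using assms False by (intro mult_mono) auto
  finally show ?thesis by simp
qed

lemma mean_plus_square_mean_plus_variance_le:
  fixes q m sq :: "'a::finite \<Rightarrow> real"
  assumes q: "\<And>a. 0 \<le> q a" "(\<Sum>a\<in>UNIV. q a) = 1"
    and sq: "\<And>a. (m a)^2 \<le> sq a" and "0 \<le> \<alpha>"
  defines "\<mu> \<equiv> \<Sum>a\<in>UNIV. q a * m a"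
  shows "\<mu> + \<alpha> * (\<mu>^2 + (\<Sum>a\<in>UNIV. q a * (m a - \<mu>)^2)) \<le> (\<Sum>a\<in>UNIV. q a * (m a + \<alpha> * sq a))"
proof -
  have "\<mu> + \<alpha> * (\<mu>^2 + (\<Sum>a\<in>UNIV. q a * (m a - \<mu>)^2)) = \<mu> + \<alpha> * (\<Sum>a\<in>UNIV. q a * (m a)^2)"
    unfolding \<mu>_def using sum_mult_square_eq_square_plus_variance[OF _ q(2), of m] by simp
  also have "\<dots> \<le> \<mu> + \<alpha> * (\<Sum>a\<in>UNIV. q a * sq a)"
    using q sq \<open>0 \<le> \<alpha>\<close> by (intro add_left_mono mult_left_mono sum_mono) auto
  also have "\<dots> = (\<Sum>a\<in>UNIV. q a * (m a + \<alpha> * sq a))"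
    unfolding \<mu>_def by (simp add: algebra_simps sum.distrib sum_distrib_left)
  finally show ?thesis .
qed

text \<open>The potential \<open>y + \<alpha> y\<^sup>2\<close> tolerates replacing a distribution \<open>x\<close> by a nearby \<open>q\<close>:
  the first-order loss is at most the distance \<open>e\<close>, and unless \<open>m\<close> is constant on the
  support of \<open>x\<close> it is paid for by the variance of \<open>m\<close> under \<open>q\<close>, which is at least \<open>c\<close>.\<close>
lemma quadratic_potential_le_perturbed:
  fixes x q m sq :: "'a::finite \<Rightarrow> real"
  assumes x: "\<And>a. 0 \<le> x a" "(\<Sum>a\<in>UNIV. x a) = 1"
    and q: "\<And>a. 0 \<le> q a" "(\<Sum>a\<in>UNIV. q a) = 1"
    and supp: "\<And>a. q a \<noteq> 0 \<Longrightarrow> 0 < x a"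
    and m: "\<And>a. 0 \<le> m a" "\<And>a. m a \<le> 1" and sq: "\<And>a. (m a)^2 \<le> sq a"
    and y: "0 \<le> y" "y \<le> (\<Sum>a\<in>UNIV. x a * m a)"
    and e: "(\<Sum>a\<in>UNIV. \<bar>x a - q a\<bar>) \<le> e"
    and \<alpha>: "0 \<le> \<alpha>" "e + 2 * \<alpha> * e \<le> \<alpha> * c"
    and spread: "(\<forall>a a'. 0 < x a \<longrightarrow> 0 < x a' \<longrightarrow> m a = m a') \<or>
                 (\<exists>a1 a2. a1 \<noteq> a2 \<and> c \<le> q a1 * q a2 * (m a1 - m a2)^2)"
  shows "y + \<alpha> * y^2 \<le> (\<Sum>a\<in>UNIV. q a * (m a + \<alpha> * sq a))"
proof -
  define \<mu> where "\<mu> = (\<Sum>a\<in>UNIV. q a * m a)"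
  define V where "V = (\<Sum>a\<in>UNIV. q a * (m a - \<mu>)^2)"
  have rhs: "\<mu> + \<alpha> * (\<mu>^2 + V) \<le> (\<Sum>a\<in>UNIV. q a * (m a + \<alpha> * sq a))"
    unfolding \<mu>_def V_def by (rule mean_plus_square_mean_plus_variance_le[OF q sq \<alpha>(1)])
  have "0 \<le> V" unfolding V_def using q by (intro sum_nonneg) auto
  from spread show ?thesis
  proof (elim disjE exE conjE)
    assume const: "\<forall>a a'. 0 < x a \<longrightarrow> 0 < x a' \<longrightarrow> m a = m a'"
    obtain a0 where "x a0 \<noteq> 0" using x(2) by (metis sum.neutral zero_neq_one)
    with x(1) have "0 < x a0" by (simp add: less_le)
    have m_a0: "m a = m a0" if "0 < x a" for a using const \<open>0 < x a0\<close> that by blast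
    have "(\<Sum>a\<in>UNIV. x a * m a) = m a0"
      using x(1) by (intro sum_mult_eq_const_on_support[OF _ x(2)] m_a0) (simp_all add: less_le)
    moreover have "\<mu> = m a0"
      unfolding \<mu>_def using supp by (intro sum_mult_eq_const_on_support[OF _ q(2)] m_a0) simp_all
    ultimately have "y \<le> \<mu>" using y by simp
    then have "\<alpha> * y^2 \<le> \<alpha> * \<mu>^2"
      using y \<alpha> by (intro mult_left_mono power_mono) auto
    moreover have "0 \<le> \<alpha> * V" using \<alpha> \<open>0 \<le> V\<close> by simp
    ultimately show ?thesis using rhs \<open>y \<le> \<mu>\<close> by (simp add: distrib_left)
  next
    fix a1 a2 assume "a1 \<noteq> a2" "c \<le> q a1 * q a2 * (m a1 - m a2)^2"
    then have "c \<le> V"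
      unfolding V_def using two_point_spread_le_sum_weighted_squares[OF q, of a1 a2 m \<mu>] by simp
    have "y - \<mu> \<le> e"
      using y sum_mult_diff_le_sum_abs[where m=m and A=UNIV and x=x and q=q, OF m] e by (simp add: \<mu>_def)
    have "0 \<le> (\<Sum>a\<in>UNIV. \<bar>x a - q a\<bar>)" by (simp add: sum_nonneg)
    then have "0 \<le> e" using e by linarith
    have "0 \<le> \<mu>" "\<mu> \<le> 1" "(\<Sum>a\<in>UNIV. x a * m a) \<le> 1"
      unfolding \<mu>_def using sum_weighted_bounds[OF q m] sum_weighted_bounds[OF x m] by auto
    then have "y^2 \<le> \<mu>^2 + 2 * e"
      using y \<open>y - \<mu> \<le> e\<close> \<open>0 \<le> e\<close> by (intro power2_le_power2_add_twice) auto
    then have "\<alpha> * y^2 \<le> \<alpha> * (\<mu>^2 + 2 * e)" using \<alpha>(1) by (rule mult_left_mono)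
    moreover have "\<alpha> * c \<le> \<alpha> * V" using \<open>c \<le> V\<close> \<alpha>(1) by (rule mult_left_mono)
    ultimately have "y + \<alpha> * y^2 \<le> \<mu> + \<alpha> * (\<mu>^2 + V)"
      using \<open>y - \<mu> \<le> e\<close> \<alpha> by (simp add: distrib_left)
    then show ?thesis using rhs by linarith
  qed
qed

section \<open>Rounding a distribution to fractions with bounded denominator\<close>

lemma pmf_embed_pmf_finite:
  fixes f :: "'a::finite \<Rightarrow> real"
  assumes "\<And>a. 0 \<le> f a" "(\<Sum>a\<in>UNIV. f a) = 1"
  shows "pmf (embed_pmf f) a = f a"
proof (rule pmf_embed_pmf)
  have "(\<integral>\<^sup>+a. ennreal (f a) \<partial>count_space UNIV) = (\<Sum>a\<in>UNIV. ennreal (f a))"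
    by (rule nn_integral_count_space_finite) simp
  also have "\<dots> = ennreal (\<Sum>a\<in>UNIV. f a)"
    using assms(1) by (rule sum_ennreal)
  finally show "(\<integral>\<^sup>+a. ennreal (f a) \<partial>count_space UNIV) = 1" using assms(2) by simp
qed (rule assms(1))

definition round_up :: "nat \<Rightarrow> ('a \<Rightarrow> real) \<Rightarrow> 'a \<Rightarrow> nat" where
  "round_up N x a = nat \<lceil>real N * x a\<rceil>"

definition round_distr :: "nat \<Rightarrow> ('a::finite \<Rightarrow> real) \<Rightarrow> 'a \<Rightarrow> real" where
  "round_distr N x a = real (round_up N x a) / real (\<Sum>b\<in>UNIV. round_up N x b)"

lemma round_distr_nonneg: "0 \<le> round_distr N x a"
  unfolding round_distr_def by (simp add: sum_nonneg)

lemma card_le_imp_pos: "CARD('a::finite) \<le> N \<Longrightarrow> 0 < N"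
proof -
  have "0 < CARD('a)" by simp
  then show "CARD('a) \<le> N \<Longrightarrow> 0 < N" by linarith
qed

lemma ex_nat_rounding_precision:
  fixes M :: nat and \<epsilon> c :: real
  assumes "0 < \<epsilon>" "0 < c"
  shows "\<exists>N. M \<le> N \<and> real M * (real M / real N) * (1 + 2 * \<epsilon>) \<le> \<epsilon> * c"
proof -
  define N where "N = max (Suc M) (nat \<lceil>real M * real M * (1 + 2 * \<epsilon>) / (\<epsilon> * c)\<rceil>)"
  have "0 < real N" unfolding N_def by simp
  have "real M * real M * (1 + 2 * \<epsilon>) / (\<epsilon> * c) \<le> real N"
    unfolding N_def by (simp add: of_nat_max) linarith
  then have "real M * real M * (1 + 2 * \<epsilon>) \<le> \<epsilon> * c * real N"
    using assms by (simp add: pos_divide_le_eq mult_ac)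
  then have "real M * (real M / real N) * (1 + 2 * \<epsilon>) \<le> \<epsilon> * c"
    using \<open>0 < real N\<close> by (simp add: field_simps)
  moreover have "M \<le> N" unfolding N_def by simp
  ultimately show ?thesis by blast
qed

context
  fixes x :: "'a::finite \<Rightarrow> real" and N :: nat
  assumes x: "\<And>a. 0 \<le> x a" "(\<Sum>a\<in>UNIV. x a) = 1" and N: "CARD('a) \<le> N"
begin

lemma round_up_bounds:
  "real N * x a \<le> real (round_up N x a)" "real (round_up N x a) \<le> real N * x a + 1"
proof -
  have "0 \<le> real N * x a" using x(1) by simp
  then have "real (round_up N x a) = of_int \<lceil>real N * x a\<rceil>"
    unfolding round_up_def by (intro of_nat_nat) simp
  then show "real N * x a \<le> real (round_up N x a)" "real (round_up N x a) \<le> real N * x a + 1"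
    using ceiling_correct[of "real N * x a"] by linarith+
qed

lemma sum_round_up_bounds:
  "N \<le> (\<Sum>a\<in>UNIV. round_up N x a)" "(\<Sum>a\<in>UNIV. round_up N x a) \<le> N + CARD('a)"
proof -
  have "real N = (\<Sum>a\<in>UNIV. real N * x a)" using x(2) by (simp flip: sum_distrib_left)
  also have "\<dots> \<le> (\<Sum>a\<in>UNIV. real (round_up N x a))" by (intro sum_mono round_up_bounds)
  finally have "real N \<le> real (\<Sum>a\<in>UNIV. round_up N x a)" by simp
  then show "N \<le> (\<Sum>a\<in>UNIV. round_up N x a)" by (simp only: of_nat_le_iff)
  have "(\<Sum>a\<in>UNIV. real (round_up N x a)) \<le> (\<Sum>a\<in>UNIV. real N * x a + 1)"
    by (intro sum_mono round_up_bounds)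
  also have "\<dots> = real N + real CARD('a)"
    using x(2) by (simp add: sum.distrib flip: sum_distrib_left)
  finally have "real (\<Sum>a\<in>UNIV. round_up N x a) \<le> real (N + CARD('a))" by simp
  then show "(\<Sum>a\<in>UNIV. round_up N x a) \<le> N + CARD('a)" by (simp only: of_nat_le_iff)
qed

lemma sum_round_up_pos: "0 < (\<Sum>a\<in>UNIV. round_up N x a)"
  using sum_round_up_bounds(1) card_le_imp_pos[OF N] by linarith

lemma sum_round_distr: "(\<Sum>a\<in>UNIV. round_distr N x a) = 1"
proof -
  have "(\<Sum>a\<in>UNIV. round_distr N x a)
          = real (\<Sum>a\<in>UNIV. round_up N x a) / real (\<Sum>a\<in>UNIV. round_up N x a)"
    by (simp only: round_distr_def sum_divide_distrib[symmetric] of_nat_sum[symmetric])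
  also have "\<dots> = 1"
    using sum_round_up_pos by (metis divide_self gr_implies_not0 of_nat_eq_0_iff)
  finally show ?thesis .
qed

lemma round_distr_eq_0_iff: "round_distr N x a = 0 \<longleftrightarrow> x a = 0"
proof -
  have "round_distr N x a = 0 \<longleftrightarrow> round_up N x a = 0"
    unfolding round_distr_def using sum_round_up_pos
    by (metis divide_eq_0_iff of_nat_eq_0_iff gr_implies_not0)
  also have "\<dots> \<longleftrightarrow> \<lceil>real N * x a\<rceil> \<le> 0"
    by (simp add: round_up_def)
  also have "\<dots> \<longleftrightarrow> x a = 0"
    using card_le_imp_pos[OF N] x(1)[of a] by (simp add: mult_le_0_iff)
  finally show ?thesis .
qed

lemma round_distr_bounds:
  "real N * x a / (real N + real CARD('a)) \<le> round_distr N x a"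
  "round_distr N x a \<le> x a + 1 / real N"
proof -
  define J where "J = real (\<Sum>b\<in>UNIV. round_up N x b)"
  have J: "real N \<le> J" "J \<le> real N + real CARD('a)"
    using sum_round_up_bounds unfolding J_def by linarith+
  have "real N * x a / (real N + real CARD('a)) \<le> real N * x a / J"
    using x(1)[of a] J card_le_imp_pos[OF N] by (intro divide_left_mono) auto
  also have "\<dots> \<le> round_distr N x a"
    unfolding round_distr_def J_def[symmetric] using round_up_bounds(1) J card_le_imp_pos[OF N]
    by (intro divide_right_mono) auto
  finally show "real N * x a / (real N + real CARD('a)) \<le> round_distr N x a" .
  have "round_distr N x a \<le> real (round_up N x a) / real N"
    unfolding round_distr_def J_def[symmetric] using J card_le_imp_pos[OF N] by (intro divide_left_mono) auto
  also have "\<dots> \<le> (real N * x a + 1) / real N"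
    using round_up_bounds(2) by (intro divide_right_mono) auto
  also have "\<dots> = x a + 1 / real N"
    using card_le_imp_pos[OF N] by (simp add: field_simps)
  finally show "round_distr N x a \<le> x a + 1 / real N" .
qed

lemma abs_diff_round_distr_le: "\<bar>x a - round_distr N x a\<bar> \<le> real CARD('a) / real N"
proof -
  have "x a \<le> 1"
    using member_le_sum[of a UNIV x] x by simp
  have "1 \<le> real CARD('a)" by (simp add: Suc_leI)
  then have "1 / real N \<le> real CARD('a) / real N" by (intro divide_right_mono) auto
  moreover have "x a - real N * x a / (real N + real CARD('a))
                   = x a * real CARD('a) / (real N + real CARD('a))"
    using card_le_imp_pos[OF N] by (simp add: field_simps)
  moreover have "\<dots> \<le> real CARD('a) / (real N + real CARD('a))"
    using \<open>x a \<le> 1\<close> by (intro divide_right_mono) (simp_all add: mult_left_le_one_le x(1))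
  moreover have "\<dots> \<le> real CARD('a) / real N"
    using card_le_imp_pos[OF N] by (intro divide_left_mono) auto
  ultimately show ?thesis
    using round_distr_bounds[of a] unfolding abs_le_iff by (intro conjI) linarith+
qed

lemma half_le_round_distr: "x a / 2 \<le> round_distr N x a"
proof -
  have "real CARD('a) * x a \<le> real N * x a"
    using N x(1)[of a] by (intro mult_right_mono) simp_all
  then have "x a / 2 \<le> real N * x a / (real N + real CARD('a))"
    using card_le_imp_pos[OF N] by (simp add: field_simps)
  then show ?thesis using round_distr_bounds(1)[of a] by linarith
qed

lemma round_distr_eq_fraction:
  "\<exists>i j. i \<le> j \<and> j \<le> N + CARD('a) \<and> round_distr N x a = real i / real j"
  unfolding round_distr_def
  by (intro exI[of _ "round_up N x a"] exI[of _ "\<Sum>b\<in>UNIV. round_up N x b"] conjI refl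
      sum_round_up_bounds(2) member_le_sum) simp_all

end

section \<open>Value iteration for safety\<close>

locale concurrent_game =
  fixes G1 G2 :: "'s::finite \<Rightarrow> 'm::finite set"
    and d :: "'s \<Rightarrow> 'm \<Rightarrow> 'm \<Rightarrow> 's pmf"
    and F :: "'s set"
  assumes cgs: "cgs G1 G2"
begin

lemma G1_nonempty: "G1 s \<noteq> {}" and G2_nonempty: "G2 s \<noteq> {}"
  using cgs by (auto simp: cgs_def)

text \<open>Mixed moves of player 1 are vectors rather than pmfs, so that the simplex is compact.\<close>
definition mixed :: "'s \<Rightarrow> (real^'m) set" where
  "mixed s = {x. (\<forall>a. 0 \<le> x$a) \<and> (\<forall>a. a \<notin> G1 s \<longrightarrow> x$a = 0) \<and> (\<Sum>a\<in>UNIV. x$a) = 1}"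

definition next_exp :: "real^'m \<Rightarrow> 's \<Rightarrow> 'm \<Rightarrow> ('s \<Rightarrow> real) \<Rightarrow> real" where
  "next_exp x s b f = (\<Sum>a\<in>UNIV. x$a * (\<Sum>t\<in>UNIV. pmf (d s a b) t * f t))"

definition guaranteed :: "real^'m \<Rightarrow> 's \<Rightarrow> ('s \<Rightarrow> real) \<Rightarrow> real" where
  "guaranteed x s f = Min ((\<lambda>b. next_exp x s b f) ` G2 s)"

definition pre :: "('s \<Rightarrow> real) \<Rightarrow> 's \<Rightarrow> real" where
  "pre f s = (if s \<in> F then (SUP x\<in>mixed s. guaranteed x s f) else 0)"

text \<open>\<open>safe_iter n = u\<^sub>n\<close> is the value of staying in \<open>F\<close> for \<open>n\<close> steps, and \<open>safe_lim = w\<close>.\<close>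
fun safe_iter :: "nat \<Rightarrow> 's \<Rightarrow> real" where
  "safe_iter 0 = (\<lambda>s. if s \<in> F then 1 else 0)"
| "safe_iter (Suc n) = pre (safe_iter n)"

definition safe_lim :: "'s \<Rightarrow> real" where
  "safe_lim s = (INF n. safe_iter n s)"

lemma mixed_nonempty: "mixed s \<noteq> {}"
proof -
  obtain a0 where "a0 \<in> G1 s" using G1_nonempty by blast
  then have "(\<chi> a. if a = a0 then 1 else 0) \<in> mixed s" by (auto simp: mixed_def)
  then show ?thesis by blast
qed

lemma compact_mixed: "compact (mixed s)"
proof -
  have "mixed s = (\<Inter>a. {x. 0 \<le> x$a}) \<inter> (\<Inter>a\<in>-G1 s. {x. x$a = 0}) \<inter> {x. (\<Sum>a\<in>UNIV. x$a) = 1}"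
    by (auto simp: mixed_def)
  also have "closed \<dots>"
    by (intro closed_Int closed_INT ballI closed_Collect_le closed_Collect_eq continuous_on_const
        continuous_on_sum continuous_on_component continuous_on_id)
  finally have "closed (mixed s)" .
  moreover have "mixed s \<subseteq> cball 0 1"
  proof
    fix x assume x: "x \<in> mixed s"
    have "norm x \<le> (\<Sum>a\<in>UNIV. \<bar>x$a\<bar>)" by (rule norm_le_l1_cart)
    also have "\<dots> = 1" using x by (simp add: mixed_def)
    finally show "x \<in> cball 0 1" by simp
  qed
  ultimately show ?thesis using bounded_cball bounded_subset compact_eq_bounded_closed by blast
qed

lemma strategy_mixed:
  assumes "strategy G1 p1" "h \<noteq> []"
  shows "(\<chi> a. pmf (p1 h) a) \<in> mixed (last h)"
proof -
  have "set_pmf (p1 h) \<subseteq> G1 (last h)" using assms by (simp add: strategy_def)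
  then have "a \<notin> G1 (last h) \<Longrightarrow> pmf (p1 h) a = 0" for a by (auto simp: set_pmf_iff)
  then show ?thesis by (simp add: mixed_def sum_pmf_UNIV)
qed

lemma next_exp_bounds:
  assumes "x \<in> mixed s" "\<And>t. 0 \<le> f t" "\<And>t. f t \<le> 1"
  shows "0 \<le> next_exp x s b f" "next_exp x s b f \<le> 1"
proof -
  have x: "\<And>a. 0 \<le> x$a" "(\<Sum>a\<in>UNIV. x$a) = 1" using assms(1) by (auto simp: mixed_def)
  have "0 \<le> (\<Sum>t\<in>UNIV. pmf (d s a b) t * f t)" "(\<Sum>t\<in>UNIV. pmf (d s a b) t * f t) \<le> 1" for a
    using sum_weighted_bounds[where p = "pmf (d s a b)", OF pmf_nonneg sum_pmf_UNIV assms(2,3)] by auto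
  then show "0 \<le> next_exp x s b f" "next_exp x s b f \<le> 1"
    unfolding next_exp_def
    using sum_weighted_bounds[where f = "\<lambda>a. \<Sum>t\<in>UNIV. pmf (d s a b) t * f t", OF x] by auto
qed

lemma next_exp_mono:
  assumes "x \<in> mixed s" "\<And>t. f t \<le> g t"
  shows "next_exp x s b f \<le> next_exp x s b g"
  using assms unfolding next_exp_def mixed_def
  by (intro sum_mono mult_left_mono) (auto intro!: mult_left_mono)

lemma guaranteed_attained: "\<exists>b\<in>G2 s. guaranteed x s f = next_exp x s b f"
proof -
  have "Min ((\<lambda>b. next_exp x s b f) ` G2 s) \<in> (\<lambda>b. next_exp x s b f) ` G2 s"
    using G2_nonempty[of s] by (intro Min_in) auto
  then show ?thesis unfolding guaranteed_def by auto
qed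

lemma guaranteed_le: "b \<in> G2 s \<Longrightarrow> guaranteed x s f \<le> next_exp x s b f"
  unfolding guaranteed_def by (rule Min_le) auto

lemma guaranteed_bounds:
  assumes "x \<in> mixed s" "\<And>t. 0 \<le> f t" "\<And>t. f t \<le> 1"
  shows "0 \<le> guaranteed x s f" "guaranteed x s f \<le> 1"
proof -
  obtain b where "guaranteed x s f = next_exp x s b f" using guaranteed_attained by blast
  then show "0 \<le> guaranteed x s f" "guaranteed x s f \<le> 1" using next_exp_bounds[OF assms] by simp_all
qed

lemma guaranteed_mono:
  assumes "x \<in> mixed s" "\<And>t. f t \<le> g t"
  shows "guaranteed x s f \<le> guaranteed x s g"
proof -
  obtain b where b: "b \<in> G2 s" "guaranteed x s g = next_exp x s b g"
    using guaranteed_attained by blast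
  have "guaranteed x s f \<le> next_exp x s b f" using b(1) by (rule guaranteed_le)
  also have "\<dots> \<le> next_exp x s b g" using assms by (rule next_exp_mono)
  finally show ?thesis using b(2) by simp
qed

lemma bdd_above_guaranteed:
  assumes "\<And>t. 0 \<le> f t" "\<And>t. f t \<le> 1"
  shows "bdd_above ((\<lambda>x. guaranteed x s f) ` mixed s)"
  using guaranteed_bounds[OF _ assms] by (intro bdd_aboveI[of _ 1]) auto

lemma pre_bounds:
  assumes "\<And>t. 0 \<le> f t" "\<And>t. f t \<le> 1"
  shows "0 \<le> pre f s" "pre f s \<le> 1"
proof -
  obtain x0 where x0: "x0 \<in> mixed s" using mixed_nonempty by blast
  have "0 \<le> guaranteed x0 s f" using guaranteed_bounds[OF x0 assms] by simp
  also have "\<dots> \<le> (SUP x\<in>mixed s. guaranteed x s f)"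
    using bdd_above_guaranteed[OF assms] x0 by (rule cSUP_upper2) simp
  finally show "0 \<le> pre f s" by (simp add: pre_def)
  have "(SUP x\<in>mixed s. guaranteed x s f) \<le> 1"
    using mixed_nonempty guaranteed_bounds[OF _ assms] by (intro cSUP_least) auto
  then show "pre f s \<le> 1" by (simp add: pre_def)
qed

lemma pre_mono:
  assumes "\<And>t. 0 \<le> g t" "\<And>t. g t \<le> 1" "\<And>t. f t \<le> g t"
  shows "pre f s \<le> pre g s"
proof -
  have "(SUP x\<in>mixed s. guaranteed x s f) \<le> (SUP x\<in>mixed s. guaranteed x s g)"
    using mixed_nonempty bdd_above_guaranteed[of g, OF assms(1,2)] guaranteed_mono[of _ s f g] assms(3)
    by (intro cSUP_mono) auto
  then show ?thesis by (simp add: pre_def)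
qed

lemma guaranteed_le_pre:
  assumes "x \<in> mixed s" "s \<in> F" "\<And>t. 0 \<le> f t" "\<And>t. f t \<le> 1"
  shows "guaranteed x s f \<le> pre f s"
  using assms(2) cSUP_upper[OF assms(1) bdd_above_guaranteed[OF assms(3,4)]] by (simp add: pre_def)

lemma safe_iter_bounds: "0 \<le> safe_iter n s" "safe_iter n s \<le> 1"
  by (induction n arbitrary: s) (simp_all add: pre_bounds)

lemma safe_iter_outside: "s \<notin> F \<Longrightarrow> safe_iter n s = 0"
  by (cases n) (auto simp: pre_def)

lemma safe_iter_Suc_le: "safe_iter (Suc n) s \<le> safe_iter n s"
proof (induction n arbitrary: s)
  case 0
  show ?case using safe_iter_bounds(2)[of "Suc 0" s] safe_iter_outside[of s "Suc 0"] by auto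
next
  case (Suc n)
  show ?case using pre_mono[of "safe_iter n" "safe_iter (Suc n)"] safe_iter_bounds Suc by simp
qed

lemma decseq_safe_iter: "decseq (\<lambda>n. safe_iter n s)"
  using safe_iter_Suc_le by (simp add: decseq_SucI)

lemma bdd_below_safe_iter: "bdd_below (range (\<lambda>n. safe_iter n s))"
  using safe_iter_bounds by (intro bdd_belowI[of _ 0]) auto

lemma safe_lim_le: "safe_lim s \<le> safe_iter n s"
  unfolding safe_lim_def using bdd_below_safe_iter by (rule cINF_lower) simp

lemma safe_lim_bounds: "0 \<le> safe_lim s" "safe_lim s \<le> 1"
  using safe_lim_le[of s 0] safe_iter_bounds[of 0 s]
  by (auto simp: safe_lim_def safe_iter_bounds intro!: cINF_greatest)

lemma safe_lim_outside: "s \<notin> F \<Longrightarrow> safe_lim s = 0"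
  using safe_lim_le[of s 0] safe_lim_bounds[of s] by simp

lemma safe_iter_tendsto: "(\<lambda>n. safe_iter n s) \<longlonglongrightarrow> safe_lim s"
  unfolding safe_lim_def by (rule LIMSEQ_decseq_INF[OF bdd_below_safe_iter decseq_safe_iter])

definition spoiler :: "('s list \<Rightarrow> 'm pmf) \<Rightarrow> nat \<Rightarrow> 's list \<Rightarrow> 'm" where
  "spoiler p1 n h = (SOME b. b \<in> G2 (last h) \<and>
     next_exp (\<chi> a. pmf (p1 h) a) (last h) b (safe_iter (n - length h))
       = guaranteed (\<chi> a. pmf (p1 h) a) (last h) (safe_iter (n - length h)))"

lemma spoiler:
  "spoiler p1 n h \<in> G2 (last h)"
  "next_exp (\<chi> a. pmf (p1 h) a) (last h) (spoiler p1 n h) (safe_iter (n - length h))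
     = guaranteed (\<chi> a. pmf (p1 h) a) (last h) (safe_iter (n - length h))"
proof -
  let ?x = "\<chi> a. pmf (p1 h) a" and ?f = "safe_iter (n - length h)"
  obtain b where "b \<in> G2 (last h)" "guaranteed ?x (last h) ?f = next_exp ?x (last h) b ?f"
    using guaranteed_attained by blast
  then have "\<exists>b. b \<in> G2 (last h) \<and> next_exp ?x (last h) b ?f = guaranteed ?x (last h) ?f"
    by auto
  then have "spoiler p1 n h \<in> G2 (last h) \<and>
      next_exp ?x (last h) (spoiler p1 n h) ?f = guaranteed ?x (last h) ?f"
    unfolding spoiler_def by (rule someI_ex)
  then show "spoiler p1 n h \<in> G2 (last h)"
    "next_exp ?x (last h) (spoiler p1 n h) ?f = guaranteed ?x (last h) ?f" by blast+
qed

lemma strategy_spoiler: "strategy G2 (\<lambda>h. return_pmf (spoiler p1 n h))"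
  using spoiler(1) by (simp add: strategy_def)

text \<open>A history of length \<open>j + 1\<close> has made \<open>j\<close> steps, so \<open>Suc n - length h\<close> of \<open>n\<close> steps remain.\<close>
definition safe_remaining :: "nat \<Rightarrow> 's list \<Rightarrow> real" where
  "safe_remaining n h = (if set h \<subseteq> F then safe_iter (Suc n - length h) (last h) else 0)"

lemma step_expectation_spoiler_le:
  assumes p1: "strategy G1 p1" and "h \<noteq> []" "length h \<le> n"
  shows "step_expectation d p1 (\<lambda>h. return_pmf (spoiler p1 n h)) h (safe_remaining n)
           \<le> safe_remaining n h"
proof (cases "set h \<subseteq> F")
  case False
  then show ?thesis by (simp add: step_expectation_def safe_remaining_def)
next
  case True
  with \<open>h \<noteq> []\<close> have "last h \<in> F" by auto
  have "step_expectation d p1 (\<lambda>h. return_pmf (spoiler p1 n h)) h (safe_remaining n)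
        = next_exp (\<chi> a. pmf (p1 h) a) (last h) (spoiler p1 n h) (safe_iter (n - length h))"
    using True safe_iter_outside
    by (auto simp: step_expectation_return next_exp_def safe_remaining_def intro!: sum.cong)
  also have "\<dots> = guaranteed (\<chi> a. pmf (p1 h) a) (last h) (safe_iter (n - length h))"
    by (rule spoiler(2))
  also have "\<dots> \<le> safe_iter (Suc (n - length h)) (last h)"
    using guaranteed_le_pre[OF strategy_mixed[OF p1 \<open>h \<noteq> []\<close>] \<open>last h \<in> F\<close> safe_iter_bounds]
    by simp
  also have "\<dots> = safe_remaining n h"
    using True \<open>length h \<le> n\<close> by (simp add: safe_remaining_def Suc_diff_le)
  finally show ?thesis .
qed

lemma expectation_spoiler_le:
  assumes "strategy G1 p1" and "j \<le> n"
  shows "measure_pmf.expectation (hist d s p1 (\<lambda>h. return_pmf (spoiler p1 n h)) j) (safe_remaining n)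
           \<le> safe_iter n s"
  using \<open>j \<le> n\<close>
proof (induction j)
  case 0
  then show ?case using safe_iter_outside[of s n] by (simp add: safe_remaining_def)
next
  case (Suc j)
  have "measure_pmf.expectation (hist d s p1 (\<lambda>h. return_pmf (spoiler p1 n h)) (Suc j)) (safe_remaining n)
        \<le> measure_pmf.expectation (hist d s p1 (\<lambda>h. return_pmf (spoiler p1 n h)) j) (safe_remaining n)"
    using Suc.prems assms(1) hist_nonempty length_hist
    by (intro expectation_hist_Suc_le step_expectation_spoiler_le) fastforce+
  also have "\<dots> \<le> safe_iter n s" using Suc by simp
  finally show ?case .
qed

lemma prob_safe_spoiler_le:
  assumes "strategy G1 p1"
  shows "measure_pmf.prob (hist d s p1 (\<lambda>h. return_pmf (spoiler p1 n h)) n) {h. set h \<subseteq> F}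
           \<le> safe_iter n s"
proof -
  let ?H = "hist d s p1 (\<lambda>h. return_pmf (spoiler p1 n h)) n"
  have "measure_pmf.prob ?H {h. set h \<subseteq> F} = measure_pmf.expectation ?H (safe_remaining n)"
    unfolding prob_eq_expectation expectation_finite_support[OF finite_set_pmf_hist]
  proof (intro sum.cong refl)
    fix h assume "h \<in> set_pmf ?H"
    then have "length h = Suc n" by (rule length_hist)
    then have "last h \<in> set h" by (cases h) auto
    with \<open>length h = Suc n\<close> show "pmf ?H h * (if h \<in> {h. set h \<subseteq> F} then 1 else 0)
             = pmf ?H h * safe_remaining n h"
      by (auto simp: safe_remaining_def)
  qed
  also have "\<dots> \<le> safe_iter n s" using expectation_spoiler_le[OF assms] by simp
  finally show ?thesis .
qed

lemma val1Safe_le_safe_lim: "val1Safe G1 G2 d F s \<le> safe_lim s"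
proof -
  have "(INF p2\<in>{p. strategy G2 p}. prSafe d F s p1 p2) \<le> safe_iter n s"
    if "strategy G1 p1" for p1 n
  proof -
    let ?p2 = "\<lambda>h. return_pmf (spoiler p1 n h)"
    have "(INF p2\<in>{p. strategy G2 p}. prSafe d F s p1 p2) \<le> prSafe d F s p1 ?p2"
      using strategy_spoiler by (intro cINF_lower bdd_belowI[of _ 0]) (auto simp: prSafe_nonneg)
    also have "\<dots> \<le> safe_iter n s"
      using prSafe_le_prob[of d F s p1 ?p2 n] prob_safe_spoiler_le[OF that, of s n] by linarith
    finally show ?thesis .
  qed
  moreover have "{p. strategy G1 p} \<noteq> {}" using ex_strategy G1_nonempty by blast
  ultimately show ?thesis
    unfolding val1Safe_def safe_lim_def by (intro cSUP_least cINF_greatest) auto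
qed

text \<open>The sets of mixed moves guaranteeing \<open>safe_lim s - 1/(n+1)\<close> against \<open>safe_iter n\<close> form a
  decreasing chain of nonempty compact sets; a point of the intersection works for the limit.\<close>
lemma ex_mixed_guaranteeing_safe_lim:
  assumes "s \<in> F"
  shows "\<exists>x\<in>mixed s. \<forall>b\<in>G2 s. safe_lim s \<le> next_exp x s b safe_lim"
proof -
  define A where "A n = {x \<in> mixed s. \<forall>b\<in>G2 s. safe_lim s - 1 / real (Suc n) \<le> next_exp x s b (safe_iter n)}"
    for n
  have "compact (A n)" for n
  proof -
    have "A n = mixed s \<inter> (\<Inter>b\<in>G2 s. {x. safe_lim s - 1 / real (Suc n) \<le> next_exp x s b (safe_iter n)})"
      by (auto simp: A_def)
    also have "compact \<dots>" unfolding next_exp_def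
      by (intro compact_Int_closed compact_mixed closed_INT ballI closed_Collect_le continuous_on_const
          continuous_on_sum continuous_on_mult_right continuous_on_component continuous_on_id)
    finally show ?thesis .
  qed
  moreover have "A n \<noteq> {}" for n
  proof -
    have "0 < 1 / real (Suc n)" by simp
    then have "safe_lim s - 1 / real (Suc n) < safe_iter (Suc n) s"
      using safe_lim_le[of s "Suc n"] by linarith
    also have "\<dots> = (SUP x\<in>mixed s. guaranteed x s (safe_iter n))"
      using assms by (simp add: pre_def)
    finally obtain x where "x \<in> mixed s" "safe_lim s - 1 / real (Suc n) < guaranteed x s (safe_iter n)"
      using less_cSUP_iff[OF mixed_nonempty bdd_above_guaranteed[of "safe_iter n", OF safe_iter_bounds]] by blast
    then have "x \<in> A n" unfolding A_def using guaranteed_le[of _ s x "safe_iter n"] by force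
    then show ?thesis by blast
  qed
  moreover have "A n \<subseteq> A m" if "m \<le> n" for m n
  proof
    fix x assume x: "x \<in> A n"
    then have "x \<in> mixed s" by (simp add: A_def)
    have "safe_lim s - 1 / real (Suc m) \<le> next_exp x s b (safe_iter m)" if "b \<in> G2 s" for b
    proof -
      have "1 / real (Suc n) \<le> 1 / real (Suc m)" using \<open>m \<le> n\<close> by (simp add: frac_le)
      then have "safe_lim s - 1 / real (Suc m) \<le> safe_lim s - 1 / real (Suc n)" by simp
      also have "\<dots> \<le> next_exp x s b (safe_iter n)" using x that by (simp add: A_def)
      also have "\<dots> \<le> next_exp x s b (safe_iter m)"
        using decseq_safe_iter \<open>m \<le> n\<close> by (intro next_exp_mono[OF \<open>x \<in> mixed s\<close>]) (simp add: decseq_def)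
      finally show ?thesis .
    qed
    then show "x \<in> A m" using \<open>x \<in> mixed s\<close> by (simp add: A_def)
  qed
  ultimately have "\<Inter>(range A) \<noteq> {}" by (rule compact_nest)
  then obtain x where x: "\<And>n. x \<in> A n" by blast
  have "safe_lim s \<le> next_exp x s b safe_lim" if "b \<in> G2 s" for b
  proof (rule LIMSEQ_le)
    show "(\<lambda>n. safe_lim s - 1 / real (Suc n)) \<longlonglongrightarrow> safe_lim s"
      using tendsto_diff[OF tendsto_const LIMSEQ_Suc[OF lim_1_over_n]] by simp
    show "(\<lambda>n. next_exp x s b (safe_iter n)) \<longlonglongrightarrow> next_exp x s b safe_lim"
      unfolding next_exp_def by (intro tendsto_intros safe_iter_tendsto)
    show "\<exists>N. \<forall>n\<ge>N. safe_lim s - 1 / real (Suc n) \<le> next_exp x s b (safe_iter n)"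
      using x that by (auto simp: A_def)
  qed
  moreover have "x \<in> mixed s" using x[of 0] by (simp add: A_def)
  ultimately show ?thesis by blast
qed

definition opt_mixed :: "'s \<Rightarrow> real^'m" where
  "opt_mixed s = (SOME x. x \<in> mixed s \<and> (s \<in> F \<longrightarrow> (\<forall>b\<in>G2 s. safe_lim s \<le> next_exp x s b safe_lim)))"

lemma opt_mixed:
  "opt_mixed s \<in> mixed s"
  "s \<in> F \<Longrightarrow> b \<in> G2 s \<Longrightarrow> safe_lim s \<le> next_exp (opt_mixed s) s b safe_lim"
proof -
  have "\<exists>x. x \<in> mixed s \<and> (s \<in> F \<longrightarrow> (\<forall>b\<in>G2 s. safe_lim s \<le> next_exp x s b safe_lim))"
  proof (cases "s \<in> F")
    case True
    then show ?thesis using ex_mixed_guaranteeing_safe_lim by blast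
  next
    case False
    then show ?thesis using mixed_nonempty by blast
  qed
  then have "opt_mixed s \<in> mixed s \<and>
      (s \<in> F \<longrightarrow> (\<forall>b\<in>G2 s. safe_lim s \<le> next_exp (opt_mixed s) s b safe_lim))"
    unfolding opt_mixed_def by (rule someI_ex)
  then show "opt_mixed s \<in> mixed s"
    "s \<in> F \<Longrightarrow> b \<in> G2 s \<Longrightarrow> safe_lim s \<le> next_exp (opt_mixed s) s b safe_lim"
    by auto
qed

lemma opt_mixed_nonneg: "0 \<le> opt_mixed s $ a"
  and sum_opt_mixed: "(\<Sum>a\<in>UNIV. opt_mixed s $ a) = 1"
  using opt_mixed(1)[of s] by (auto simp: mixed_def)

definition next_mean :: "'s \<Rightarrow> 'm \<Rightarrow> 'm \<Rightarrow> real" where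
  "next_mean s a b = (\<Sum>t\<in>UNIV. pmf (d s a b) t * safe_lim t)"

definition next_sq :: "'s \<Rightarrow> 'm \<Rightarrow> 'm \<Rightarrow> real" where
  "next_sq s a b = (\<Sum>t\<in>UNIV. pmf (d s a b) t * (safe_lim t)^2)"

lemma next_mean_bounds: "0 \<le> next_mean s a b" "next_mean s a b \<le> 1"
  unfolding next_mean_def
  using sum_weighted_bounds[where p = "pmf (d s a b)", OF pmf_nonneg sum_pmf_UNIV safe_lim_bounds] by auto

lemma next_mean_square_le: "(next_mean s a b)^2 \<le> next_sq s a b"
proof -
  have "next_sq s a b
        = (next_mean s a b)^2 + (\<Sum>t\<in>UNIV. pmf (d s a b) t * (safe_lim t - next_mean s a b)^2)"
    unfolding next_sq_def next_mean_def
    by (rule sum_mult_square_eq_square_plus_variance) (auto simp: sum_pmf_UNIV)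
  moreover have "0 \<le> (\<Sum>t\<in>UNIV. pmf (d s a b) t * (safe_lim t - next_mean s a b)^2)"
    by (intro sum_nonneg) auto
  ultimately show ?thesis by linarith
qed

definition spread_bound :: "real \<Rightarrow> bool" where
  "spread_bound c \<longleftrightarrow> (\<forall>s b.
     (\<forall>a a'. 0 < opt_mixed s $ a \<longrightarrow> 0 < opt_mixed s $ a' \<longrightarrow> next_mean s a b = next_mean s a' b) \<or>
     (\<exists>a1 a2. a1 \<noteq> a2 \<and>
        c \<le> opt_mixed s $ a1 * opt_mixed s $ a2 * (next_mean s a1 b - next_mean s a2 b)^2 / 4))"

lemma ex_spread_bound: "\<exists>c>0. spread_bound c"
proof -
  define gap where "gap = (\<lambda>(s, b, a1, a2).
    opt_mixed s $ a1 * opt_mixed s $ a2 * (next_mean s a1 b - next_mean s a2 b)^2 / 4)"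
  define V where "V = insert 1 {v \<in> range gap. 0 < v}"
  define c where "c = Min V"
  have "finite V" by (simp add: V_def)
  have "0 < c" unfolding c_def using \<open>finite V\<close> by (simp add: Min_gr_iff V_def)
  moreover have "spread_bound c"
    unfolding spread_bound_def
  proof (intro allI)
    fix s b
    show "(\<forall>a a'. 0 < opt_mixed s $ a \<longrightarrow> 0 < opt_mixed s $ a' \<longrightarrow> next_mean s a b = next_mean s a' b) \<or>
      (\<exists>a1 a2. a1 \<noteq> a2 \<and>
        c \<le> opt_mixed s $ a1 * opt_mixed s $ a2 * (next_mean s a1 b - next_mean s a2 b)^2 / 4)"
    proof (cases "\<forall>a a'. 0 < opt_mixed s $ a \<longrightarrow> 0 < opt_mixed s $ a' \<longrightarrow> next_mean s a b = next_mean s a' b")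
      case False
      then obtain a1 a2 where
        a12: "0 < opt_mixed s $ a1" "0 < opt_mixed s $ a2" "next_mean s a1 b \<noteq> next_mean s a2 b"
        by blast
      then have "0 < gap (s, b, a1, a2)" by (simp add: gap_def)
      then have "gap (s, b, a1, a2) \<in> V" by (simp add: V_def)
      then have "c \<le> gap (s, b, a1, a2)" unfolding c_def using \<open>finite V\<close> by (rule Min_le[rotated])
      moreover have "a1 \<noteq> a2" using a12 by auto
      ultimately show ?thesis by (intro disjI2 exI[of _ a1] exI[of _ a2]) (simp add: gap_def)
    qed (rule disjI1)
  qed
  ultimately show ?thesis by blast
qed

definition rounded_sel :: "nat \<Rightarrow> 's \<Rightarrow> 'm pmf" where
  "rounded_sel N s = embed_pmf (round_distr N (\<lambda>a. opt_mixed s $ a))"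

context
  fixes N :: nat
  assumes N: "CARD('m) \<le> N"
begin

lemma pmf_rounded_sel: "pmf (rounded_sel N s) a = round_distr N (\<lambda>a. opt_mixed s $ a) a"
  unfolding rounded_sel_def
  by (intro pmf_embed_pmf_finite round_distr_nonneg sum_round_distr opt_mixed_nonneg sum_opt_mixed N)

lemma rounded_sel_support: "pmf (rounded_sel N s) a = 0 \<longleftrightarrow> opt_mixed s $ a = 0"
  unfolding pmf_rounded_sel by (intro round_distr_eq_0_iff opt_mixed_nonneg sum_opt_mixed N)

lemma selector_rounded_sel: "selector G1 (rounded_sel N)"
  unfolding selector_def
proof (intro allI subsetI)
  fix s a assume "a \<in> set_pmf (rounded_sel N s)"
  then have "opt_mixed s $ a \<noteq> 0" using rounded_sel_support by (simp add: set_pmf_iff)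
  then show "a \<in> G1 s" using opt_mixed(1)[of s] by (auto simp: mixed_def)
qed

lemma k_uniform_rounded_sel: "k_uniform G1 G2 d F (N + CARD('m)) (rounded_sel N)"
  unfolding k_uniform_def pmf_rounded_sel
  using round_distr_eq_fraction[OF opt_mixed_nonneg sum_opt_mixed N] by blast

lemma rounded_sel_spread:
  assumes "spread_bound c"
  shows "(\<forall>a a'. 0 < opt_mixed s $ a \<longrightarrow> 0 < opt_mixed s $ a' \<longrightarrow> next_mean s a b = next_mean s a' b) \<or>
    (\<exists>a1 a2. a1 \<noteq> a2 \<and>
      c \<le> pmf (rounded_sel N s) a1 * pmf (rounded_sel N s) a2 * (next_mean s a1 b - next_mean s a2 b)^2)"
proof -
  let ?x = "\<lambda>a. opt_mixed s $ a" and ?q = "pmf (rounded_sel N s)" and ?m = "\<lambda>a. next_mean s a b"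
  have "(\<forall>a a'. 0 < ?x a \<longrightarrow> 0 < ?x a' \<longrightarrow> ?m a = ?m a') \<or>
        (\<exists>a1 a2. a1 \<noteq> a2 \<and> c \<le> ?x a1 * ?x a2 * (?m a1 - ?m a2)^2 / 4)"
    using assms unfolding spread_bound_def by blast
  then show ?thesis
  proof (elim disjE exE conjE)
    fix a1 a2 assume "a1 \<noteq> a2" and c_le: "c \<le> ?x a1 * ?x a2 * (?m a1 - ?m a2)^2 / 4"
    have "?x a1 / 2 * (?x a2 / 2) \<le> ?q a1 * ?q a2"
      unfolding pmf_rounded_sel using opt_mixed_nonneg
      by (intro mult_mono half_le_round_distr opt_mixed_nonneg sum_opt_mixed N)
        (simp_all add: round_distr_nonneg)
    then have "?x a1 / 2 * (?x a2 / 2) * (?m a1 - ?m a2)^2 \<le> ?q a1 * ?q a2 * (?m a1 - ?m a2)^2"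
      by (rule mult_right_mono) simp
    with c_le have "c \<le> ?q a1 * ?q a2 * (?m a1 - ?m a2)^2" by simp
    with \<open>a1 \<noteq> a2\<close> show ?thesis by blast
  qed blast
qed

end

definition potential :: "real \<Rightarrow> 's list \<Rightarrow> real" where
  "potential \<alpha> h = (if set h \<subseteq> F then safe_lim (last h) + \<alpha> * (safe_lim (last h))^2 else 0)"

context
  fixes N :: nat and c \<alpha> :: real
  assumes N: "CARD('m) \<le> N" and c: "spread_bound c" and \<alpha>: "0 \<le> \<alpha>"
    and precision: "real CARD('m) * (real CARD('m) / real N) * (1 + 2 * \<alpha>) \<le> \<alpha> * c"
begin

lemma potential_le_rounded_sel:
  assumes "s \<in> F" "b \<in> G2 s"
  shows "safe_lim s + \<alpha> * (safe_lim s)^2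
           \<le> (\<Sum>a\<in>UNIV. pmf (rounded_sel N s) a * (next_mean s a b + \<alpha> * next_sq s a b))"
proof (rule quadratic_potential_le_perturbed[where x = "\<lambda>a. opt_mixed s $ a" and c = c
      and e = "real CARD('m) * (real CARD('m) / real N)"])
  let ?x = "\<lambda>a. opt_mixed s $ a" and ?q = "pmf (rounded_sel N s)" and ?m = "\<lambda>a. next_mean s a b"
  note x = opt_mixed_nonneg sum_opt_mixed
  show "0 \<le> ?x a" "(\<Sum>a\<in>UNIV. ?x a) = 1" for a by (fact x)+
  show "0 \<le> ?q a" "(\<Sum>a\<in>UNIV. ?q a) = 1" for a by (simp_all add: sum_pmf_UNIV)
  show "?q a \<noteq> 0 \<Longrightarrow> 0 < ?x a" for a
    using rounded_sel_support[OF N] x(1)[of s a] by (simp add: less_le)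
  show "0 \<le> ?m a" "?m a \<le> 1" "(?m a)^2 \<le> next_sq s a b" for a
    by (fact next_mean_bounds next_mean_square_le)+
  show "0 \<le> safe_lim s" by (fact safe_lim_bounds)
  show "safe_lim s \<le> (\<Sum>a\<in>UNIV. ?x a * ?m a)"
    using opt_mixed(2)[OF assms] by (simp add: next_exp_def next_mean_def)
  have "(\<Sum>a\<in>UNIV. \<bar>?x a - ?q a\<bar>) \<le> (\<Sum>a\<in>(UNIV :: 'm set). real CARD('m) / real N)"
    unfolding pmf_rounded_sel[OF N] by (intro sum_mono abs_diff_round_distr_le x N)
  then show "(\<Sum>a\<in>UNIV. \<bar>?x a - ?q a\<bar>) \<le> real CARD('m) * (real CARD('m) / real N)" by simp
  show "0 \<le> \<alpha>" by (fact \<alpha>)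
  show "real CARD('m) * (real CARD('m) / real N) + 2 * \<alpha> * (real CARD('m) * (real CARD('m) / real N))
          \<le> \<alpha> * c"
    using precision by (metis distrib_left mult.commute mult.right_neutral)
  show "(\<forall>a a'. 0 < ?x a \<longrightarrow> 0 < ?x a' \<longrightarrow> ?m a = ?m a') \<or>
        (\<exists>a1 a2. a1 \<noteq> a2 \<and> c \<le> ?q a1 * ?q a2 * (?m a1 - ?m a2)^2)"
    using rounded_sel_spread[OF N c] .
qed

lemma potential_le_step_expectation:
  assumes "strategy G2 p2" "h \<noteq> []"
  shows "potential \<alpha> h \<le> step_expectation d (memoryless (rounded_sel N)) p2 h (potential \<alpha>)"
proof (cases "set h \<subseteq> F")
  case False
  then show ?thesis
    using \<alpha> safe_lim_bounds by (simp add: potential_def step_expectation_nonneg)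
next
  case True
  define s where "s = last h"
  with True \<open>h \<noteq> []\<close> have "s \<in> F" by auto
  let ?g = "\<lambda>a b. next_mean s a b + \<alpha> * next_sq s a b"
  have "potential \<alpha> (h @ [t]) = safe_lim t + \<alpha> * (safe_lim t)^2" for t
    using True safe_lim_outside[of t] by (auto simp: potential_def)
  then have "step_expectation d (memoryless (rounded_sel N)) p2 h (potential \<alpha>)
      = (\<Sum>a\<in>UNIV. pmf (rounded_sel N s) a * (\<Sum>b\<in>UNIV. pmf (p2 h) b * ?g a b))"
    by (simp add: step_expectation_def memoryless_def s_def next_mean_def next_sq_def
        algebra_simps sum.distrib sum_distrib_left)
  also have "\<dots> = (\<Sum>b\<in>UNIV. pmf (p2 h) b * (\<Sum>a\<in>UNIV. pmf (rounded_sel N s) a * ?g a b))"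
    unfolding sum_distrib_left by (subst sum.swap) (simp add: mult_ac)
  also have "\<dots> \<ge> (\<Sum>b\<in>UNIV. pmf (p2 h) b * potential \<alpha> h)"
  proof (intro sum_mono)
    fix b
    show "pmf (p2 h) b * potential \<alpha> h \<le> pmf (p2 h) b * (\<Sum>a\<in>UNIV. pmf (rounded_sel N s) a * ?g a b)"
    proof (cases "b \<in> set_pmf (p2 h)")
      case True
      then have "b \<in> G2 s" using assms unfolding strategy_def s_def by blast
      with \<open>s \<in> F\<close> \<open>set h \<subseteq> F\<close> show ?thesis
        by (intro mult_left_mono) (simp_all add: potential_def s_def potential_le_rounded_sel)
    qed (simp add: set_pmf_iff)
  qed
  also have "(\<Sum>b\<in>UNIV. pmf (p2 h) b * potential \<alpha> h) = potential \<alpha> h"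
    by (simp add: sum_pmf_UNIV flip: sum_distrib_right)
  finally show ?thesis .
qed

lemma potential_le_expectation_hist:
  assumes "strategy G2 p2"
  shows "potential \<alpha> [s] \<le> measure_pmf.expectation (hist d s (memoryless (rounded_sel N)) p2 n) (potential \<alpha>)"
proof (induction n)
  case (Suc n)
  also have "measure_pmf.expectation (hist d s (memoryless (rounded_sel N)) p2 n) (potential \<alpha>)
      \<le> measure_pmf.expectation (hist d s (memoryless (rounded_sel N)) p2 (Suc n)) (potential \<alpha>)"
  proof (rule expectation_hist_le_Suc)
    fix h assume "h \<in> set_pmf (hist d s (memoryless (rounded_sel N)) p2 n)"
    then show "potential \<alpha> h \<le> step_expectation d (memoryless (rounded_sel N)) p2 h (potential \<alpha>)"
      using assms by (intro potential_le_step_expectation hist_nonempty)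
  qed
  finally show ?case .
qed simp

lemma safe_lim_le_prob_rounded:
  assumes "strategy G2 p2"
  shows "safe_lim s - \<alpha> \<le> measure_pmf.prob (hist d s (memoryless (rounded_sel N)) p2 n) {h. set h \<subseteq> F}"
proof -
  let ?H = "hist d s (memoryless (rounded_sel N)) p2 n"
  define P where "P = measure_pmf.prob ?H {h. set h \<subseteq> F}"
  have "potential \<alpha> h \<le> (1 + \<alpha>) * (if h \<in> {h. set h \<subseteq> F} then 1 else 0)" for h
  proof -
    have sq: "\<alpha> * (safe_lim t)^2 \<le> \<alpha>" for t
      using \<alpha> safe_lim_bounds[of t] by (simp add: mult_left_le power_le_one)
    show ?thesis unfolding potential_def using sq[of "last h"] safe_lim_bounds[of "last h"] by auto
  qed
  then have "measure_pmf.expectation ?H (potential \<alpha>)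
      \<le> measure_pmf.expectation ?H (\<lambda>h. (1 + \<alpha>) * (if h \<in> {h. set h \<subseteq> F} then 1 else 0))"
    unfolding expectation_finite_support[OF finite_set_pmf_hist] by (intro sum_mono mult_left_mono) auto
  also have "\<dots> = (1 + \<alpha>) * P"
    unfolding P_def prob_eq_expectation by simp
  finally have "measure_pmf.expectation ?H (potential \<alpha>) \<le> (1 + \<alpha>) * P" .
  moreover have "safe_lim s \<le> potential \<alpha> [s]"
    using \<alpha> safe_lim_outside[of s] by (simp add: potential_def)
  moreover have "\<alpha> * P \<le> \<alpha>" using \<alpha> by (simp add: P_def mult_left_le)
  ultimately show ?thesis
    using potential_le_expectation_hist[OF assms, of s n] unfolding P_def[symmetric]
    by (simp add: algebra_simps)
qed

lemma rounded_sel_optimal_up_to: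
  "val1Safe G1 G2 d F s - \<alpha> \<le> (INF p2\<in>{p. strategy G2 p}. prSafe d F s (memoryless (rounded_sel N)) p2)"
proof -
  have "safe_lim s - \<alpha> \<le> prSafe d F s (memoryless (rounded_sel N)) p2" if "strategy G2 p2" for p2
    unfolding prSafe_def using safe_lim_le_prob_rounded[OF that] by (intro cINF_greatest) auto
  moreover have "{p. strategy G2 p} \<noteq> {}" using ex_strategy G2_nonempty by blast
  ultimately have "safe_lim s - \<alpha> \<le> (INF p2\<in>{p. strategy G2 p}. prSafe d F s (memoryless (rounded_sel N)) p2)"
    by (intro cINF_greatest) auto
  then show ?thesis using val1Safe_le_safe_lim[of s] by linarith
qed

end

end

theorem lemma15:
  fixes G1 G2 :: "'s::finite \<Rightarrow> 'm::finite set"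
    and d :: "'s \<Rightarrow> 'm \<Rightarrow> 'm \<Rightarrow> 's pmf"
    and F :: "'s set" and \<epsilon> :: real
  assumes "cgs G1 G2" and "\<epsilon> > 0"
  shows "\<exists>k::nat. k > 0 \<and> (\<exists>xi. selector G1 xi \<and> k_uniform G1 G2 d F k xi \<and>
           (\<forall>s. (INF p2\<in>{p. strategy G2 p}. prSafe d F s (memoryless xi) p2)
                  \<ge> val1Safe G1 G2 d F s - \<epsilon>))"
proof -
  interpret concurrent_game G1 G2 d F by unfold_locales (rule assms(1))
  obtain c where "0 < c" "spread_bound c" using ex_spread_bound by blast
  obtain N where N: "CARD('m) \<le> N"
    and precision: "real CARD('m) * (real CARD('m) / real N) * (1 + 2 * \<epsilon>) \<le> \<epsilon> * c"
    using ex_nat_rounding_precision[OF \<open>\<epsilon> > 0\<close> \<open>0 < c\<close>] by blast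
  show ?thesis
  proof (intro exI conjI allI)
    show "0 < N + CARD('m)" by simp
    show "selector G1 (rounded_sel N)" using N by (rule selector_rounded_sel)
    show "k_uniform G1 G2 d F (N + CARD('m)) (rounded_sel N)" using N by (rule k_uniform_rounded_sel)
    show "val1Safe G1 G2 d F s - \<epsilon>
            \<le> (INF p2\<in>{p. strategy G2 p}. prSafe d F s (memoryless (rounded_sel N)) p2)" for s
      using N \<open>spread_bound c\<close> less_imp_le[OF \<open>\<epsilon> > 0\<close>] precision
      by (rule rounded_sel_optimal_up_to)
  qed
qed

end
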